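(* For every positive integer $n$, \[ \overline{M}(n)=\sum_{d\mid n}\varphi(d)\sum_{\substack{\delta\mid n\\ \gcd(\delta,d)=1}}\mu(\delta)\sum_{\substack{1\le j\le n/\delta\\ \delta j\equiv 1 \ (\mathrm{mod}\ d)}} f\!\left(\left\lfloor \frac{n}{j\delta}\right\rfloor\right), \] where $d$ and $\delta$ run over the positive divisors of $n$, and for $d=1$ the congruence condition is vacuous.
   Context: For a nonempty finite set $A$ of positive integers, $(A)$ denotes the greatest common divisor of the elements of $A$. $\varphi$ is Euler's totient function and $\mu$ is the Möbius function. For $m\in\mathbb{N}$, $f(m)$ is the number of nonempty subsets $A\subseteq\{1,2,\ldots,m\}$ with $(A)=1$ (equivalently $f(m)=\sum_{d=1}^m\mu(d)(2^{\lfloor m/d\rfloor}-1)$). Define \[ \overline{M}(n)=\sum_{\substack{\emptyset\ne A\subseteq\{1,\ldots,n\}\\ \gcd((A),n)=1}}\gcd((A)-1,n), \] the sum over all nonempty subsets $A$ of $\{1,\ldots,n\}$ with $\gcd((A),n)=1$, with the convention $\gcd(0,n)=n$. *)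

theory Defs
  imports "HOL-Number_Theory.Number_Theory" "HOL-Computational_Algebra.Squarefree"
begin

definition moebius_mu :: "nat \<Rightarrow> int" where
  "moebius_mu n = (if n = 0 then 0 else if squarefree n then (-1) ^ card (prime_factors n) else 0)"

definition f_cop :: "nat \<Rightarrow> nat" where
  "f_cop m = card {A. A \<subseteq> {1..m} \<and> A \<noteq> {} \<and> Gcd A = 1}"

text \<open>Mbar n = sum over nonempty A \<subseteq> {1..n} with gcd((A),n)=1 of gcd((A)-1, n).
  Since (A) \<ge> 1, natural subtraction is exact; gcd 0 n = n holds by definition.\<close>
definition Mbar :: "nat \<Rightarrow> nat" where
  "Mbar n = (\<Sum>A \<in> {A. A \<subseteq> {1..n} \<and> A \<noteq> {} \<and> coprime (Gcd A) n}. gcd (Gcd A - 1) n)"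

end

theory Submission
  imports Defs
begin

text \<open>Dividing by k is a bijection from the nonempty subsets of {1..n} with gcd k onto the
  nonempty subsets of {1..n div k} with gcd 1, so exactly f(n div k) subsets have gcd k and
  Mbar(n) is the sum of gcd(k - 1, n) f(n div k) over the k \<le> n coprime to n.
  Expanding gcd(k - 1, n) as the sum of \<phi>(d) over the common divisors d of k - 1 and n,
  detecting coprimality of k and n by the sum of \<mu>(\<delta>) over the common divisors \<delta> of k and n,
  exchanging the sums and writing k = j \<delta> gives the formula; the congruence
  \<delta> j \<equiv> 1 (mod d) has no solution unless \<delta> and d are coprime.\<close>

lemma moebius_mu_prime_mult:
  assumes p: "prime (p::nat)" and "\<not> p dvd d" and "d > 0"
  shows "moebius_mu (p * d) = - moebius_mu d"
proof -
  have "coprime p d" using assms by (simp add: prime_imp_coprime)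
  then have "squarefree (p * d) \<longleftrightarrow> squarefree d"
    using squarefree_mult_coprime squarefree_prime[OF p] squarefree_mono[of d "p * d"] by auto
  moreover have "prime_factors (p * d) = insert p (prime_factors d)"
    using prime_factors_product[of p d] p \<open>d > 0\<close> prime_prime_factors[OF p] by auto
  moreover have "p \<notin> prime_factors d" using \<open>\<not> p dvd d\<close> by auto
  ultimately show ?thesis using p \<open>d > 0\<close> by (auto simp: moebius_mu_def prime_gt_0_nat)
qed

lemma moebius_mu_eq_0_if_square_dvd:
  assumes "(p::nat) > 1" "p * p dvd d"
  shows "moebius_mu d = 0"
proof -
  have "\<not> squarefree d" using assms by (intro not_squarefreeI[of p]) (auto simp: power2_eq_square)
  then show ?thesis by (simp add: moebius_mu_def)
qed

text \<open>For a prime p dividing m = p r, the divisors of m on which \<mu> does not vanish are the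
  divisors d of r prime to p and their multiples p d, and \<mu>(p d) = -\<mu>(d).\<close>

lemma sum_moebius_mu_divisors:
  assumes "(m::nat) > 0"
  shows "(\<Sum>d | d dvd m. moebius_mu d) = (if m = 1 then 1 else 0)"
proof (cases "m = 1")
  case False
  then obtain p where p: "prime p" "p dvd m" using assms prime_factor_nat by blast
  then obtain r where m: "m = p * r" by blast
  have "r > 0" using m assms by (cases r) auto
  have "p > 1" using p prime_gt_1_nat by blast
  define A where "A = {d. d dvd r \<and> \<not> p dvd d}"
  have "finite A" using \<open>r > 0\<close> by (simp add: A_def)
  have "(\<Sum>d | d dvd m. moebius_mu d) = (\<Sum>d \<in> A \<union> (*) p ` A. moebius_mu d)"
  proof (rule sum.mono_neutral_right)
    show "finite {d. d dvd m}" using assms by simp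
    show "A \<union> (*) p ` A \<subseteq> {d. d dvd m}" by (auto simp: A_def m)
    show "\<forall>d \<in> {d. d dvd m} - (A \<union> (*) p ` A). moebius_mu d = 0"
    proof
      fix d assume d: "d \<in> {d. d dvd m} - (A \<union> (*) p ` A)"
      have "p dvd d"
      proof (rule ccontr)
        assume "\<not> p dvd d"
        moreover from this have "coprime d p" using p(1) by (metis prime_imp_coprime coprime_commute)
        then have "d dvd r" using d by (simp add: m coprime_dvd_mult_right_iff)
        ultimately show False using d by (simp add: A_def)
      qed
      then obtain e where e: "d = p * e" by blast
      have "e dvd r" using d \<open>p > 1\<close> by (simp add: m e)
      then have "p dvd e" using d e by (auto simp: A_def)
      then show "moebius_mu d = 0" using \<open>p > 1\<close> e by (intro moebius_mu_eq_0_if_square_dvd) auto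
    qed
  qed
  also have "\<dots> = (\<Sum>d \<in> A. moebius_mu d) + (\<Sum>d \<in> (*) p ` A. moebius_mu d)"
    using \<open>finite A\<close> by (intro sum.union_disjoint) (auto simp: A_def)
  also have "(\<Sum>d \<in> (*) p ` A. moebius_mu d) = (\<Sum>d \<in> A. moebius_mu (p * d))"
    using \<open>p > 1\<close> by (simp add: sum.reindex inj_on_def)
  also have "(\<Sum>d \<in> A. moebius_mu d) + (\<Sum>d \<in> A. moebius_mu (p * d)) = 0"
  proof -
    have "moebius_mu (p * d) = - moebius_mu d" if "d \<in> A" for d
      using that p(1) \<open>r > 0\<close> by (intro moebius_mu_prime_mult) (auto simp: A_def dvd_pos_nat)
    then show ?thesis by (simp add: sum.distrib[symmetric])
  qed
  finally show ?thesis using False by simp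
qed (simp add: moebius_mu_def)

lemma gcd_eq_sum_totient:
  assumes "n > 0"
  shows "int (gcd m n) = (\<Sum>d | d dvd n. if d dvd m then int (totient d) else 0)"
proof -
  have "int (gcd m n) = (\<Sum>d | d dvd gcd m n. int (totient d))"
    by (simp only: totient_divisor_sum of_nat_sum[symmetric])
  also have "{d. d dvd gcd m n} = {d \<in> {d. d dvd n}. d dvd m}" by auto
  also have "(\<Sum>d \<in> {d \<in> {d. d dvd n}. d dvd m}. int (totient d))
      = (\<Sum>d | d dvd n. if d dvd m then int (totient d) else 0)"
    using assms by (intro sum.inter_filter) simp
  finally show ?thesis .
qed

lemma coprime_indicator_eq_sum_moebius_mu:
  assumes "(n::nat) > 0"
  shows "(if coprime k n then 1 else 0) = (\<Sum>d | d dvd n. if d dvd k then moebius_mu d else 0)"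
proof -
  have "(\<Sum>d | d dvd n. if d dvd k then moebius_mu d else 0) = (\<Sum>d \<in> {d \<in> {d. d dvd n}. d dvd k}. moebius_mu d)"
    using assms by (intro sum.inter_filter[symmetric]) simp
  also have "{d \<in> {d. d dvd n}. d dvd k} = {d. d dvd gcd k n}" by auto
  also have "(\<Sum>d | d dvd gcd k n. moebius_mu d) = (if gcd k n = 1 then 1 else 0)"
    by (rule sum_moebius_mu_divisors) (use assms in simp)
  finally show ?thesis by (simp only: coprime_iff_gcd_eq_1)
qed

lemma mult_mem_atLeastAtMost_iff:
  assumes "(k::nat) > 0"
  shows "k * x \<in> {1..n} \<longleftrightarrow> x \<in> {1..n div k}"
  using less_eq_div_iff_mult_less_eq[OF assms, of x n] assms by (auto simp: mult.commute[of x k])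

lemma subsets_with_Gcd_eq_image_scale:
  assumes "(k::nat) > 0"
  shows "{A. A \<subseteq> {1..n} \<and> A \<noteq> {} \<and> Gcd A = k}
       = (`) ((*) k) ` {B. B \<subseteq> {1..n div k} \<and> B \<noteq> {} \<and> Gcd B = 1}"
proof (intro equalityI subsetI)
  fix A assume "A \<in> {A. A \<subseteq> {1..n} \<and> A \<noteq> {} \<and> Gcd A = k}"
  then have A: "A \<subseteq> {1..n}" "A \<noteq> {}" "Gcd A = k" by auto
  define B where "B = (\<lambda>a. a div k) ` A"
  have "k dvd a" if "a \<in> A" for a using Gcd_dvd[OF that] A(3) by simp
  then have "(\<lambda>a. k * (a div k)) ` A = (\<lambda>a. a) ` A"
    by (intro image_cong) (simp_all add: dvd_mult_div_cancel)
  then have "(*) k ` B = A" by (simp add: B_def image_image)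
  moreover from this have "Gcd B = 1" using A(3) assms Gcd_mult[of k B] by simp
  moreover have "B \<subseteq> {1..n div k}"
  proof
    fix b assume "b \<in> B"
    then have "k * b \<in> {1..n}" using A(1) \<open>(*) k ` B = A\<close> by blast
    then show "b \<in> {1..n div k}" using mult_mem_atLeastAtMost_iff[OF assms] by blast
  qed
  moreover have "B \<noteq> {}" using A(2) by (simp add: B_def)
  ultimately show "A \<in> (`) ((*) k) ` {B. B \<subseteq> {1..n div k} \<and> B \<noteq> {} \<and> Gcd B = 1}" by blast
next
  fix A assume "A \<in> (`) ((*) k) ` {B. B \<subseteq> {1..n div k} \<and> B \<noteq> {} \<and> Gcd B = 1}"
  then obtain B where "A = (*) k ` B" "B \<subseteq> {1..n div k}" "B \<noteq> {}" "Gcd B = 1" by auto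
  then show "A \<in> {A. A \<subseteq> {1..n} \<and> A \<noteq> {} \<and> Gcd A = k}"
    using mult_mem_atLeastAtMost_iff[OF assms] by (auto simp: Gcd_mult)
qed

lemma card_subsets_with_Gcd:
  assumes "(k::nat) > 0"
  shows "card {A. A \<subseteq> {1..n} \<and> A \<noteq> {} \<and> Gcd A = k} = f_cop (n div k)"
proof -
  have "inj ((*) k)" using assms by (simp add: inj_on_def)
  then have "inj_on ((`) ((*) k)) X" for X by (simp add: inj_on_def inj_image_eq_iff)
  then show ?thesis
    unfolding f_cop_def subsets_with_Gcd_eq_image_scale[OF assms] by (rule card_image)
qed

lemma Gcd_nonempty_subset_atLeastAtMost:
  assumes "A \<subseteq> {1..(n::nat)}" "A \<noteq> {}"
  shows "Gcd A \<in> {1..n}"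
proof -
  obtain a where "a \<in> A" using assms(2) by blast
  then have a: "a \<in> A" "1 \<le> a" "a \<le> n" using assms(1) by auto
  then have "Gcd A \<le> a" by (simp add: Gcd_dvd dvd_imp_le)
  moreover have "Gcd A \<noteq> 0" using Gcd_dvd[OF a(1)] a(2) by (metis dvd_0_left_iff not_one_le_zero)
  ultimately show ?thesis using a(3) by (simp only: atLeastAtMost_iff) linarith
qed

lemma sum_over_coprime_Gcd_subsets:
  fixes F :: "nat \<Rightarrow> int"
  shows "(\<Sum>A \<in> {A. A \<subseteq> {1..n} \<and> A \<noteq> {} \<and> coprime (Gcd A) n}. F (Gcd A))
       = (\<Sum>k\<in>{1..n}. if coprime k n then F k * int (f_cop (n div k)) else 0)"
proof -
  let ?S = "{A. A \<subseteq> {1..n} \<and> A \<noteq> {} \<and> coprime (Gcd A) n}"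
  have "finite ?S" by (rule finite_subset[of _ "Pow {1..n}"]) auto
  moreover have "Gcd ` ?S \<subseteq> {1..n}" using Gcd_nonempty_subset_atLeastAtMost by blast
  ultimately have "(\<Sum>A \<in> ?S. F (Gcd A)) = (\<Sum>k\<in>{1..n}. \<Sum>A \<in> {A \<in> ?S. Gcd A = k}. F (Gcd A))"
    by (rule sum.group[OF _ finite_atLeastAtMost, symmetric])
  also have "\<dots> = (\<Sum>k\<in>{1..n}. \<Sum>A \<in> {A \<in> ?S. Gcd A = k}. F k)"
    by (intro sum.cong refl) simp
  also have "\<dots> = (\<Sum>k\<in>{1..n}. if coprime k n then F k * int (f_cop (n div k)) else 0)"
  proof (intro sum.cong refl)
    fix k assume "k \<in> {1..n}"
    have "{A \<in> ?S. Gcd A = k} = (if coprime k n then {A. A \<subseteq> {1..n} \<and> A \<noteq> {} \<and> Gcd A = k} else {})"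
      by auto
    then show "(\<Sum>A \<in> {A \<in> ?S. Gcd A = k}. F k) = (if coprime k n then F k * int (f_cop (n div k)) else 0)"
      using \<open>k \<in> {1..n}\<close> card_subsets_with_Gcd[of k n] by simp
  qed
  finally show ?thesis .
qed

lemma Mbar_eq_sum_coprime:
  "int (Mbar n) = (\<Sum>k\<in>{1..n}. if coprime k n then int (gcd (k - 1) n) * int (f_cop (n div k)) else 0)"
  unfolding Mbar_def of_nat_sum by (rule sum_over_coprime_Gcd_subsets)

lemma weighted_gcd_sum_eq_divisor_sums:
  fixes c :: "nat \<Rightarrow> int"
  assumes "n > 0"
  shows "(\<Sum>k\<in>K. if coprime k n then int (gcd (k - 1) n) * c k else 0)
    = (\<Sum>d | d dvd n. int (totient d) *
         (\<Sum>\<delta> | \<delta> dvd n. moebius_mu \<delta> * (\<Sum>k\<in>K. if \<delta> dvd k \<and> d dvd k - 1 then c k else 0)))"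
proof -
  let ?term = "\<lambda>k d \<delta>. int (totient d) * (moebius_mu \<delta> * (if \<delta> dvd k \<and> d dvd k - 1 then c k else 0))"
  have pointwise: "(if coprime k n then int (gcd (k - 1) n) * c k else 0)
      = (\<Sum>d | d dvd n. \<Sum>\<delta> | \<delta> dvd n. ?term k d \<delta>)" for k
  proof -
    have "(if coprime k n then int (gcd (k - 1) n) * c k else 0)
        = int (gcd (k - 1) n) * ((if coprime k n then 1 else 0) * c k)"
      by simp
    also have "\<dots> = (\<Sum>d | d dvd n. if d dvd k - 1 then int (totient d) else 0)
        * (\<Sum>\<delta> | \<delta> dvd n. (if \<delta> dvd k then moebius_mu \<delta> else 0) * c k)"
      by (simp only: gcd_eq_sum_totient[OF assms] coprime_indicator_eq_sum_moebius_mu[OF assms]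
          sum_distrib_right[where r = "c k"])
    also have "\<dots> = (\<Sum>d | d dvd n. \<Sum>\<delta> | \<delta> dvd n.
        (if d dvd k - 1 then int (totient d) else 0) * ((if \<delta> dvd k then moebius_mu \<delta> else 0) * c k))"
      by (rule sum_product)
    also have "\<dots> = (\<Sum>d | d dvd n. \<Sum>\<delta> | \<delta> dvd n. ?term k d \<delta>)"
      by (intro sum.cong refl) simp
    finally show ?thesis .
  qed
  have "(\<Sum>k\<in>K. if coprime k n then int (gcd (k - 1) n) * c k else 0)
      = (\<Sum>k\<in>K. \<Sum>d | d dvd n. \<Sum>\<delta> | \<delta> dvd n. ?term k d \<delta>)"
    by (simp only: pointwise)
  also have "\<dots> = (\<Sum>d | d dvd n. \<Sum>k\<in>K. \<Sum>\<delta> | \<delta> dvd n. ?term k d \<delta>)"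
    by (rule sum.swap)
  also have "\<dots> = (\<Sum>d | d dvd n. \<Sum>\<delta> | \<delta> dvd n. \<Sum>k\<in>K. ?term k d \<delta>)"
    by (rule sum.cong[OF refl], rule sum.swap)
  finally show ?thesis by (simp only: sum_distrib_left)
qed

lemma sum_multiples_cong_one:
  fixes F :: "nat \<Rightarrow> int"
  assumes "\<delta> > 0"
  shows "(\<Sum>k\<in>{1..n}. if \<delta> dvd k \<and> d dvd k - 1 then F k else 0)
     = (\<Sum>j | 1 \<le> j \<and> j \<le> n div \<delta> \<and> [\<delta> * j = 1] (mod d). F (j * \<delta>))"
proof -
  let ?J = "{j. 1 \<le> j \<and> j \<le> n div \<delta> \<and> [\<delta> * j = 1] (mod d)}"
  have mem: "\<delta> * j \<in> {k\<in>{1..n}. \<delta> dvd k \<and> d dvd k - 1} \<longleftrightarrow> j \<in> ?J" for j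
    using mult_mem_atLeastAtMost_iff[OF assms, of j n] by (auto simp: cong_altdef_nat)
  have "{k\<in>{1..n}. \<delta> dvd k \<and> d dvd k - 1} = (\<lambda>j. \<delta> * j) ` ?J"
  proof (intro equalityI subsetI)
    fix k assume k: "k \<in> {k\<in>{1..n}. \<delta> dvd k \<and> d dvd k - 1}"
    then have "\<delta> dvd k" by simp
    then obtain j where "k = \<delta> * j" by (rule dvdE)
    then show "k \<in> (\<lambda>j. \<delta> * j) ` ?J" using k mem by blast
  qed (use mem in blast)
  moreover have "inj_on (\<lambda>j. \<delta> * j) ?J" using assms by (simp add: inj_on_def)
  ultimately have "(\<Sum>k \<in> {k\<in>{1..n}. \<delta> dvd k \<and> d dvd k - 1}. F k) = (\<Sum>j\<in>?J. F (\<delta> * j))"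
    by (simp add: sum.reindex)
  moreover have "(\<Sum>k\<in>{1..n}. if \<delta> dvd k \<and> d dvd k - 1 then F k else 0)
      = (\<Sum>k \<in> {k\<in>{1..n}. \<delta> dvd k \<and> d dvd k - 1}. F k)"
    by (rule sum.inter_filter[symmetric]) simp
  ultimately show ?thesis by (simp only: mult.commute)
qed

lemma cong_one_imp_coprime:
  assumes "[\<delta> * j = 1] (mod (d::nat))"
  shows "coprime \<delta> d"
  using cong_imp_coprime[OF cong_sym[OF assms]] by simp

lemma divisor_sum_moebius_multiples_cong_one:
  fixes F :: "nat \<Rightarrow> int"
  assumes "n > 0"
  shows "(\<Sum>\<delta> | \<delta> dvd n. moebius_mu \<delta> * (\<Sum>k\<in>{1..n}. if \<delta> dvd k \<and> d dvd k - 1 then F k else 0))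
     = (\<Sum>\<delta> | \<delta> dvd n \<and> coprime \<delta> d. moebius_mu \<delta> *
          (\<Sum>j | 1 \<le> j \<and> j \<le> n div \<delta> \<and> [\<delta> * j = 1] (mod d). F (j * \<delta>)))"
proof -
  let ?J = "\<lambda>\<delta>. {j. 1 \<le> j \<and> j \<le> n div \<delta> \<and> [\<delta> * j = 1] (mod d)}"
  have "(\<Sum>\<delta> | \<delta> dvd n. moebius_mu \<delta> * (\<Sum>k\<in>{1..n}. if \<delta> dvd k \<and> d dvd k - 1 then F k else 0))
      = (\<Sum>\<delta> | \<delta> dvd n. moebius_mu \<delta> * (\<Sum>j \<in> ?J \<delta>. F (j * \<delta>)))"
    by (rule sum.cong[OF refl], rule arg_cong[where f = "(*) _"], rule sum_multiples_cong_one)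
      (use assms in \<open>auto intro: dvd_pos_nat\<close>)
  also have "\<dots> = (\<Sum>\<delta> | \<delta> dvd n \<and> coprime \<delta> d. moebius_mu \<delta> * (\<Sum>j \<in> ?J \<delta>. F (j * \<delta>)))"
  proof (rule sum.mono_neutral_right)
    show "finite {\<delta>. \<delta> dvd n}" using assms by simp
    show "\<forall>\<delta> \<in> {\<delta>. \<delta> dvd n} - {\<delta>. \<delta> dvd n \<and> coprime \<delta> d}.
        moebius_mu \<delta> * (\<Sum>j \<in> ?J \<delta>. F (j * \<delta>)) = 0"
    proof
      fix \<delta> assume "\<delta> \<in> {\<delta>. \<delta> dvd n} - {\<delta>. \<delta> dvd n \<and> coprime \<delta> d}"
      then have "?J \<delta> = {}" using cong_one_imp_coprime by auto
      then show "moebius_mu \<delta> * (\<Sum>j \<in> ?J \<delta>. F (j * \<delta>)) = 0" by (simp only: sum.empty mult_zero_right)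
    qed
  qed auto
  finally show ?thesis .
qed

theorem mainTheorem1:
  fixes n :: nat
  assumes "n > 0"
  shows "int (Mbar n) =
    (\<Sum>d | d dvd n. int (totient d) *
       (\<Sum>\<delta> | \<delta> dvd n \<and> coprime \<delta> d. moebius_mu \<delta> *
          (\<Sum>j | 1 \<le> j \<and> j \<le> n div \<delta> \<and> [\<delta> * j = 1] (mod d).
              int (f_cop (n div (j * \<delta>))))))"
proof -
  have "int (Mbar n) = (\<Sum>d | d dvd n. int (totient d) * (\<Sum>\<delta> | \<delta> dvd n. moebius_mu \<delta> *
      (\<Sum>k\<in>{1..n}. if \<delta> dvd k \<and> d dvd k - 1 then int (f_cop (n div k)) else 0)))"
    unfolding Mbar_eq_sum_coprime by (rule weighted_gcd_sum_eq_divisor_sums[OF assms])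
  then show ?thesis
    by (simp only: divisor_sum_moebius_multiples_cong_one[OF assms])
qed

end
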